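(* Fix a horizon $T\ge 1$. Consider a discrete-time system with control inputs $u=(u_0,\dots,u_{T-1})$, exogenous inputs $\delta=(\delta_0,\dots,\delta_T)$, and state $x_t=(x^{\rm aff}_t,x^{\rm cvx}_t)$, $t=0,\dots,T$, where the initial state is $x_0=f_0(\delta_0)$ for some mapping $f_0$, and for $t=1,\dots,T$ \[ x^{\rm aff}_t = A_t(\delta_t)x^{\rm aff}_{t-1}+B_t(\delta_t)u_{t-1}+w_t(\delta_t),\qquad x^{\rm cvx}_t = h_t(x^{\rm aff}_{t-1},x^{\rm cvx}_{t-1},u_{t-1},\delta_t), \] with $A_t(\delta_t),B_t(\delta_t)$ matrices, $w_t(\delta_t)$ vectors and $h_t$ vector-valued mappings. Let $x=\phi(u,\delta)$ denote the resulting state trajectory $(x_0,\dots,x_T)$, obtained by iterating the dynamics. Let $c_0,\dots,c_J$ be scalar-valued functions $c_j(x,u,\delta)$ that are convex in $(x,u)$ for every $\delta$. Suppose that for every $\delta$: (1) for $t=1,\dots,T$, each component (row) of $h_t$ is (a) jointly convex in $(x^{\rm aff}_{t-1},x^{\rm cvx}_{t-1},u_{t-1})$ and (b) nondecreasing in each element of $x^{\rm cvx}_{t-1}$; (2) for $j=0,\dots,J$, the function $(x^{\rm aff},x^{\rm cvx},u)\mapsto c_j((x^{\rm aff},x^{\rm cvx}),u,\delta)$ is nondecreasing in each element of $x^{\rm cvx}=(x^{\rm cvx}_0,\dots,x^{\rm cvx}_T)$. Then the system is a convex system, i.e., for every $\delta$ and every $j=0,\dots,J$, the function $u\mapsto c_j(\phi(u,\delta),u,\delta)$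 is convex.
   Context: Here $c_0$ plays the role of a cost and $c_1,\dots,c_J$ of constraint functions ($c_j\le 0$). A system with dynamics giving input-state map $\phi$, cost $c_0$ and constraints $c_1,\dots,c_J$ is called a convex system if $u\mapsto c_j(\phi(u,\delta),u,\delta)$ is convex for all $\delta$ and all $j=0,\dots,J$. The trajectory notation $x^{\rm aff}=(x^{\rm aff}_0,\dots,x^{\rm aff}_T)$ is used; all functions are finite-valued on the relevant domains. *)

theory Defs
  imports "HOL-Analysis.Analysis"
begin

text \<open>Time-indexed trajectories are modelled as functions nat => vector.
  Only the indices relevant for the horizon T matter.
  Convex combinations of trajectories are taken pointwise.\<close>

definition seq_comb :: "real \<Rightarrow> (nat \<Rightarrow> 'a::real_vector) \<Rightarrow> (nat \<Rightarrow> 'a) \<Rightarrow> nat \<Rightarrow> 'a" where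
  "seq_comb \<theta> u v = (\<lambda>t. \<theta> *\<^sub>R u t + (1 - \<theta>) *\<^sub>R v t)"

definition seq_convex :: "((nat \<Rightarrow> 'a::real_vector) \<Rightarrow> real) \<Rightarrow> bool" where
  "seq_convex F \<longleftrightarrow> (\<forall>u v \<theta>. 0 \<le> \<theta> \<longrightarrow> \<theta> \<le> 1 \<longrightarrow>
      F (seq_comb \<theta> u v) \<le> \<theta> * F u + (1 - \<theta>) * F v)"

definition seq_convex2 :: "((nat \<Rightarrow> 'a::real_vector) \<Rightarrow> (nat \<Rightarrow> 'b::real_vector) \<Rightarrow> real) \<Rightarrow> bool" where
  "seq_convex2 F \<longleftrightarrow> (\<forall>x u y v \<theta>. 0 \<le> \<theta> \<longrightarrow> \<theta> \<le> 1 \<longrightarrow>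
      F (seq_comb \<theta> x y) (seq_comb \<theta> u v) \<le> \<theta> * F x u + (1 - \<theta>) * F y v)"

definition vupd :: "real^'n \<Rightarrow> 'n \<Rightarrow> real \<Rightarrow> real^'n" where
  "vupd z i a = (\<chi> k. if k = i then a else z $ k)"

definition traj_upd_cvx ::
  "(nat \<Rightarrow> (real^'na) \<times> (real^'nc)) \<Rightarrow> nat \<Rightarrow> 'nc \<Rightarrow> real \<Rightarrow> nat \<Rightarrow> (real^'na) \<times> (real^'nc)" where
  "traj_upd_cvx x t i a = x(t := (fst (x t), vupd (snd (x t)) i a))"

fun dyn ::
  "('d \<Rightarrow> (real^'na) \<times> (real^'nc))
   \<Rightarrow> (nat \<Rightarrow> 'd \<Rightarrow> real^'na^'na) \<Rightarrow> (nat \<Rightarrow> 'd \<Rightarrow> real^'m^'na) \<Rightarrow> (nat \<Rightarrow> 'd \<Rightarrow> real^'na)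
   \<Rightarrow> (nat \<Rightarrow> real^'na \<Rightarrow> real^'nc \<Rightarrow> real^'m \<Rightarrow> 'd \<Rightarrow> real^'nc)
   \<Rightarrow> (nat \<Rightarrow> real^'m) \<Rightarrow> (nat \<Rightarrow> 'd) \<Rightarrow> nat \<Rightarrow> (real^'na) \<times> (real^'nc)" where
  "dyn f0 A B w h u \<delta> 0 = f0 (\<delta> 0)"
| "dyn f0 A B w h u \<delta> (Suc t) =
     (let xa = fst (dyn f0 A B w h u \<delta> t); xc = snd (dyn f0 A B w h u \<delta> t) in
       (A (Suc t) (\<delta> (Suc t)) *v xa + B (Suc t) (\<delta> (Suc t)) *v u t + w (Suc t) (\<delta> (Suc t)),
        h (Suc t) xa xc (u t) (\<delta> (Suc t))))"

text \<open>The input-state map phi: the trajectory (x_0,...,x_T); entries beyond the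
  horizon T are fixed to 0 by convention.\<close>
definition phi ::
  "nat \<Rightarrow> ('d \<Rightarrow> (real^'na) \<times> (real^'nc))
   \<Rightarrow> (nat \<Rightarrow> 'd \<Rightarrow> real^'na^'na) \<Rightarrow> (nat \<Rightarrow> 'd \<Rightarrow> real^'m^'na) \<Rightarrow> (nat \<Rightarrow> 'd \<Rightarrow> real^'na)
   \<Rightarrow> (nat \<Rightarrow> real^'na \<Rightarrow> real^'nc \<Rightarrow> real^'m \<Rightarrow> 'd \<Rightarrow> real^'nc)
   \<Rightarrow> (nat \<Rightarrow> real^'m) \<Rightarrow> (nat \<Rightarrow> 'd) \<Rightarrow> nat \<Rightarrow> (real^'na) \<times> (real^'nc)" where
  "phi T f0 A B w h u \<delta> = (\<lambda>t. if t \<le> T then dyn f0 A B w h u \<delta> t else 0)"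

definition convex_system where
  "convex_system T J f0 A B w h c \<longleftrightarrow>
     (\<forall>\<delta>. \<forall>j\<le>J. seq_convex (\<lambda>u. c j (phi T f0 A B w h u \<delta>) u \<delta>))"

end

theory Submission
  imports Defs
begin

text \<open>The affine part of the state depends affinely on the input, so a convex combination of
  inputs produces the same combination of affine states. By induction over time, the convex part
  of the state then stays componentwise below the corresponding combination of convex states:
  monotonicity of \<open>h\<^sub>t\<close> in the previous convex state lets us pass to that upper bound, and
  joint convexity of \<open>h\<^sub>t\<close> bounds the result. The same two properties of \<open>c\<^sub>j\<close> finish the
  argument.\<close>

lemma mono_vupd_le_partial:
  fixes f :: "real^'n \<Rightarrow> 'b::preorder"
  assumes mono: "\<And>z i a b. a \<le> b \<Longrightarrow> f (vupd z i a) \<le> f (vupd z i b)"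
    and le: "\<And>i. z $ i \<le> z' $ i"
    and "finite S"
  shows "f z \<le> f (\<chi> k. if k \<in> S then z' $ k else z $ k)"
  using \<open>finite S\<close>
proof (induction S rule: finite_induct)
  case empty
  then show ?case by simp
next
  case (insert i S)
  let ?m = "\<lambda>S. (\<chi> k. if k \<in> S then z' $ k else z $ k) :: real^'n"
  have "?m S = vupd (?m S) i (z $ i)"
    using insert(2) by (auto simp: vupd_def vec_eq_iff)
  moreover have "?m (insert i S) = vupd (?m S) i (z' $ i)"
    by (auto simp: vupd_def vec_eq_iff)
  ultimately have "f (?m S) \<le> f (?m (insert i S))"
    using mono[OF le[of i], of "?m S" i] by simp
  with insert.IH show ?case by (rule order_trans)
qed

lemma mono_vupd_le:
  fixes f :: "real^'n \<Rightarrow> 'b::preorder"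
  assumes "\<And>z i a b. a \<le> b \<Longrightarrow> f (vupd z i a) \<le> f (vupd z i b)"
    and "\<And>i. z $ i \<le> z' $ i"
  shows "f z \<le> f z'"
  using mono_vupd_le_partial[of f z z' UNIV] assms by simp

lemma mono_traj_upd_cvx_le:
  fixes g :: "(nat \<Rightarrow> (real^'na) \<times> (real^'nc)) \<Rightarrow> 'b::preorder"
  assumes mono: "\<And>x t i a b. t \<le> T \<Longrightarrow> a \<le> b \<Longrightarrow>
         g (traj_upd_cvx x t i a) \<le> g (traj_upd_cvx x t i b)"
    and fst_eq: "\<And>t. t \<le> T \<Longrightarrow> fst (x t) = fst (x' t)"
    and snd_le: "\<And>t k. t \<le> T \<Longrightarrow> snd (x t) $ k \<le> snd (x' t) $ k"
    and beyond: "\<And>t. T < t \<Longrightarrow> x t = x' t"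
  shows "g x \<le> g x'"
proof -
  let ?m = "\<lambda>S t. if t \<in> S then x' t else x t"
  have partial: "g x \<le> g (?m S)" if "finite S" "S \<subseteq> {..T}" for S
    using that
  proof (induction S rule: finite_induct)
    case empty
    then show ?case by simp
  next
    case (insert t S)
    have "t \<le> T" using insert by auto
    define F where "F = (\<lambda>xc. g ((?m S)(t := (fst (x' t), xc))))"
    have F_mono: "F (vupd xc i a) \<le> F (vupd xc i b)" if "a \<le> b" for xc i a b
      using mono[OF \<open>t \<le> T\<close> that, of "(?m S)(t := (fst (x' t), xc))" i]
      by (simp add: F_def traj_upd_cvx_def)
    have upd_old: "(?m S)(t := (fst (x' t), snd (x t))) = ?m S"
      using insert(2) fst_eq[OF \<open>t \<le> T\<close>] by (auto simp: fun_eq_iff prod_eq_iff)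
    have upd_new: "(?m S)(t := (fst (x' t), snd (x' t))) = ?m (insert t S)"
      by (auto simp: fun_eq_iff)
    have "g x \<le> g (?m S)" using insert.IH insert.prems by simp
    also have "g (?m S) = F (snd (x t))" using upd_old by (simp add: F_def)
    also have "\<dots> \<le> F (snd (x' t))"
      using F_mono snd_le[OF \<open>t \<le> T\<close>] by (rule mono_vupd_le)
    also have "\<dots> = g (?m (insert t S))" using upd_new by (simp add: F_def)
    finally show ?case .
  qed
  have "?m {..T} = x'" using beyond by (auto simp: fun_eq_iff not_le)
  with partial[of "{..T}"] show ?thesis by simp
qed

lemma fst_dyn_seq_comb:
  "fst (dyn f0 A B w h (seq_comb \<theta> u v) \<delta> t)
     = \<theta> *\<^sub>R fst (dyn f0 A B w h u \<delta> t) + (1 - \<theta>) *\<^sub>R fst (dyn f0 A B w h v \<delta> t)"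
proof (induction t)
  case 0
  then show ?case by (simp add: algebra_simps)
next
  case (Suc t)
  then show ?case
    by (simp only: dyn.simps Let_def fst_conv seq_comb_def) (simp add: algebra_simps)
qed

lemma snd_dyn_seq_comb_le:
  assumes h_convex: "\<And>t k. 1 \<le> t \<Longrightarrow> t \<le> T \<Longrightarrow>
         convex_on UNIV (\<lambda>(xa, xc, v). h t xa xc v (\<delta> t) $ k)"
    and h_mono: "\<And>t k xa xc v i a b. 1 \<le> t \<Longrightarrow> t \<le> T \<Longrightarrow> a \<le> b \<Longrightarrow>
         h t xa (vupd xc i a) v (\<delta> t) $ k \<le> h t xa (vupd xc i b) v (\<delta> t) $ k"
    and "0 \<le> \<theta>" "\<theta> \<le> 1" "t \<le> T"
  shows "snd (dyn f0 A B w h (seq_comb \<theta> u v) \<delta> t) $ k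
     \<le> (\<theta> *\<^sub>R snd (dyn f0 A B w h u \<delta> t) + (1 - \<theta>) *\<^sub>R snd (dyn f0 A B w h v \<delta> t)) $ k"
  using \<open>t \<le> T\<close>
proof (induction t arbitrary: k)
  case 0
  then show ?case by (simp add: algebra_simps)
next
  case (Suc t)
  have t: "1 \<le> Suc t" "Suc t \<le> T" using Suc by auto
  let ?D = "\<lambda>u. dyn f0 A B w h u \<delta> t"
  let ?uv = "seq_comb \<theta> u v"
  let ?H = "\<lambda>(xa, xc, v). h (Suc t) xa xc v (\<delta> (Suc t)) $ k"
  have "snd (dyn f0 A B w h ?uv \<delta> (Suc t)) $ k = ?H (fst (?D ?uv), snd (?D ?uv), ?uv t)"
    by (simp add: Let_def)
  also have "\<dots> \<le> ?H (fst (?D ?uv), \<theta> *\<^sub>R snd (?D u) + (1 - \<theta>) *\<^sub>R snd (?D v), ?uv t)"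
    using mono_vupd_le[where f = "\<lambda>z. h (Suc t) (fst (?D ?uv)) z (?uv t) (\<delta> (Suc t)) $ k"]
      h_mono[OF t] Suc by simp
  also have "\<dots> = ?H (\<theta> *\<^sub>R (fst (?D u), snd (?D u), u t)
                      + (1 - \<theta>) *\<^sub>R (fst (?D v), snd (?D v), v t))"
    unfolding fst_dyn_seq_comb by (simp add: seq_comb_def)
  also have "\<dots> \<le> \<theta> * ?H (fst (?D u), snd (?D u), u t)
                      + (1 - \<theta>) * ?H (fst (?D v), snd (?D v), v t)"
    using convex_onD[OF h_convex[OF t], of "1 - \<theta>" "(fst (?D u), snd (?D u), u t)"
        "(fst (?D v), snd (?D v), v t)"] \<open>0 \<le> \<theta>\<close> \<open>\<theta> \<le> 1\<close>
    by simp
  finally show ?case by (simp add: Let_def)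
qed

theorem theorem1:
  fixes T J :: nat
    and f0 :: "'d \<Rightarrow> (real^'na) \<times> (real^'nc)"
    and A :: "nat \<Rightarrow> 'd \<Rightarrow> real^'na^'na"
    and B :: "nat \<Rightarrow> 'd \<Rightarrow> real^'m^'na"
    and w :: "nat \<Rightarrow> 'd \<Rightarrow> real^'na"
    and h :: "nat \<Rightarrow> real^'na \<Rightarrow> real^'nc \<Rightarrow> real^'m \<Rightarrow> 'd \<Rightarrow> real^'nc"
    and c :: "nat \<Rightarrow> (nat \<Rightarrow> (real^'na) \<times> (real^'nc)) \<Rightarrow> (nat \<Rightarrow> real^'m) \<Rightarrow> (nat \<Rightarrow> 'd) \<Rightarrow> real"
  assumes T: "T \<ge> 1"
    and c_convex: "\<And>\<delta> j. j \<le> J \<Longrightarrow> seq_convex2 (\<lambda>x u. c j x u \<delta>)"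
    and h_convex: "\<And>\<delta> t k. 1 \<le> t \<Longrightarrow> t \<le> T \<Longrightarrow>
         convex_on UNIV (\<lambda>(xa, xc, v). h t xa xc v (\<delta> t) $ k)"
    and h_mono: "\<And>\<delta> t k xa xc v i a b. 1 \<le> t \<Longrightarrow> t \<le> T \<Longrightarrow> a \<le> b \<Longrightarrow>
         h t xa (vupd xc i a) v (\<delta> t) $ k \<le> h t xa (vupd xc i b) v (\<delta> t) $ k"
    and c_mono: "\<And>\<delta> j x u t i a b. j \<le> J \<Longrightarrow> t \<le> T \<Longrightarrow> a \<le> b \<Longrightarrow>
         c j (traj_upd_cvx x t i a) u \<delta> \<le> c j (traj_upd_cvx x t i b) u \<delta>"
  shows "convex_system T J f0 A B w h c"
  unfolding convex_system_def seq_convex_def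
proof (intro allI impI)
  fix \<delta> :: "nat \<Rightarrow> 'd" and j :: nat and u v :: "nat \<Rightarrow> real^'m" and \<theta> :: real
  assume "j \<le> J" "0 \<le> \<theta>" "\<theta> \<le> 1"
  let ?\<phi> = "\<lambda>u. phi T f0 A B w h u \<delta>"
  let ?uv = "seq_comb \<theta> u v"
  have "c j (?\<phi> ?uv) ?uv \<delta> \<le> c j (seq_comb \<theta> (?\<phi> u) (?\<phi> v)) ?uv \<delta>"
  proof (rule mono_traj_upd_cvx_le[where g = "\<lambda>x. c j x ?uv \<delta>" and T = T])
    show "c j (traj_upd_cvx x t i a) ?uv \<delta> \<le> c j (traj_upd_cvx x t i b) ?uv \<delta>"
      if "t \<le> T" "a \<le> b" for x t i a b
      using c_mono[OF \<open>j \<le> J\<close> that] .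
    show "fst (?\<phi> ?uv t) = fst (seq_comb \<theta> (?\<phi> u) (?\<phi> v) t)" if "t \<le> T" for t
      using that fst_dyn_seq_comb[of f0 A B w h \<theta> u v \<delta> t]
      by (simp add: phi_def seq_comb_def)
    show "snd (?\<phi> ?uv t) $ k \<le> snd (seq_comb \<theta> (?\<phi> u) (?\<phi> v) t) $ k"
      if "t \<le> T" for t k
      using snd_dyn_seq_comb_le[where T = T and h = h and \<delta> = \<delta>,
          OF h_convex[where \<delta> = \<delta>] h_mono[where \<delta> = \<delta>] \<open>0 \<le> \<theta>\<close> \<open>\<theta> \<le> 1\<close> that]
      by (simp add: phi_def seq_comb_def that)
    show "?\<phi> ?uv t = seq_comb \<theta> (?\<phi> u) (?\<phi> v) t" if "T < t" for t
      using that by (simp add: phi_def seq_comb_def)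
  qed
  also have "\<dots> \<le> \<theta> * c j (?\<phi> u) u \<delta> + (1 - \<theta>) * c j (?\<phi> v) v \<delta>"
    using c_convex[OF \<open>j \<le> J\<close>] \<open>0 \<le> \<theta>\<close> \<open>\<theta> \<le> 1\<close> unfolding seq_convex2_def by blast
  finally show "c j (?\<phi> ?uv) ?uv \<delta> \<le> \<theta> * c j (?\<phi> u) u \<delta> + (1 - \<theta>) * c j (?\<phi> v) v \<delta>" .
qed

end
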